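(* Let $\beta\in\mathbb{R}$ and let $f\not\equiv 0$ be analytic in the half-plane $\{z:\Re z>\beta\}$, and suppose that for every $a>0$ one has $f(t)=O(e^{-at})$ as $t\to+\infty$, $t\in\mathbb{R}^+$. Then for every sufficiently small $\epsilon\ge 0$ and every $b>0$, the function $f(z)e^{-bz^{1-\epsilon}}$ (principal branch) is unbounded in the closed right half-plane (intersected with the domain $\{\Re z>\beta\}$ of $f$). *)

theory Defs
  imports "HOL-Complex_Analysis.Complex_Analysis" "HOL-Library.Landau_Symbols"
begin

end

theory Submission
  imports Defs
begin

text \<open>
  Shift f to the right so that the weighted function h(z) = f(z + c) exp(-b (z + c) powr r)
  is holomorphic and bounded on the closed right half-plane; on the positive real axis its
  modulus is at most that of f(t + c), so it decays faster than every exponential.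
  For a > 0 the function h(z) exp(a z) is bounded on the boundary rays of both right quadrants
  and of exponential type, so by Phragmen-Lindelof (with the weight exp(-d (w + 1) Ln (w + 1))
  on a quadrant) it is bounded on the half-plane. A second Phragmen-Lindelof argument (with
  the weight 1 / (1 + d z)) bounds it by the supremum M of |h| on the imaginary axis.
  Hence |h(z)| \<le> M exp(-a Re z) for every a, so h, and with it f, vanishes on a half-plane,
  and f = 0 by analytic continuation.
\<close>

lemma frontier_Collect_le_subset:
  fixes f g :: "'a::topological_space \<Rightarrow> 'b::linorder_topology"
  assumes "continuous_on UNIV f" "continuous_on UNIV g"
  shows "frontier {x. f x \<le> g x} \<subseteq> {x. f x = g x}"
proof
  fix x assume x: "x \<in> frontier {x. f x \<le> g x}"
  have "closed {x. f x \<le> g x}" "open {x. f x < g x}"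
    using assms by (auto intro: closed_Collect_le open_Collect_less)
  then have "f x \<le> g x" "x \<notin> interior {x. f x \<le> g x}"
    using x by (auto simp: frontier_def)
  moreover have "{x. f x < g x} \<subseteq> interior {x. f x \<le> g x}"
    using \<open>open {x. f x < g x}\<close> by (rule interior_maximal[rotated]) auto
  ultimately have "\<not> f x < g x" by blast
  with \<open>f x \<le> g x\<close> show "x \<in> {x. f x = g x}" by simp
qed

lemma maximum_modulus_frontier_unbounded:
  fixes \<Phi> :: "complex \<Rightarrow> complex"
  assumes "closed D" and hol: "\<Phi> holomorphic_on D"
    and frontier_bound: "\<And>z. z \<in> frontier D \<Longrightarrow> norm (\<Phi> z) \<le> B"
    and far_bound: "\<And>z. z \<in> D \<Longrightarrow> R \<le> norm z \<Longrightarrow> norm (\<Phi> z) \<le> B"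
    and "z \<in> D"
  shows "norm (\<Phi> z) \<le> B"
proof (cases "R \<le> norm z")
  case False
  let ?S = "D \<inter> cball 0 R"
  have "closed ?S" using \<open>closed D\<close> by blast
  show ?thesis
  proof (rule maximum_modulus_frontier[of \<Phi> ?S])
    show "\<Phi> holomorphic_on interior ?S"
      using hol by (rule holomorphic_on_subset) (meson Int_lower1 interior_subset order_trans)
    show "continuous_on (closure ?S) \<Phi>"
      using holomorphic_on_imp_continuous_on[OF hol] \<open>closed ?S\<close>
      by (auto intro: continuous_on_subset)
    show "z \<in> ?S" using False \<open>z \<in> D\<close> by simp
  next
    fix w assume "w \<in> frontier ?S"
    then have "w \<in> D" "w \<in> frontier D \<or> norm w = R"
      using \<open>closed ?S\<close> \<open>closed D\<close> by (auto simp: frontier_Int)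
    then show "norm (\<Phi> w) \<le> B" using frontier_bound far_bound by auto
  qed (simp add: bounded_Int)
qed (use far_bound \<open>z \<in> D\<close> in auto)

lemma Re_mult_Ln_ge:
  assumes "\<bar>Im u\<bar> \<le> Re u" "u \<noteq> 0"
  shows "Re u * (ln (norm u) - pi) \<le> Re (u * Ln u)"
proof -
  have "\<bar>Arg u\<bar> \<le> pi" using mpi_less_Arg[of u] Arg_le_pi[of u] by auto
  then have "\<bar>Im u * Arg u\<bar> \<le> Re u * pi"
    using assms(1) by (simp add: abs_mult mult_mono)
  moreover have "Re (u * Ln u) = Re u * ln (norm u) - Im u * Arg u"
    using assms(2) by (simp add: Re_Ln Arg_eq_Im_Ln)
  ultimately show ?thesis by (simp add: algebra_simps abs_le_iff)
qed

lemma Re_mult_Ln_ge_const: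
  assumes "\<bar>Im u\<bar> \<le> Re u" "1 \<le> Re u"
  shows "- (pi * exp pi) \<le> Re (u * Ln u)"
proof -
  have norm_u: "1 \<le> norm u" "Re u \<le> norm u"
    using complex_Re_le_cmod[of u] assms(2) by auto
  have "- (pi * exp pi) \<le> Re u * (ln (norm u) - pi)"
  proof (cases "pi \<le> ln (norm u)")
    case True
    then have "0 \<le> Re u * (ln (norm u) - pi)" using assms(2) by simp
    then show ?thesis using mult_nonneg_nonneg[OF pi_ge_zero exp_ge_zero[of pi]] by linarith
  next
    case False
    have "norm u = exp (ln (norm u))" by (rule exp_ln[symmetric]) (use norm_u in linarith)
    also have "\<dots> < exp pi" using False by simp
    finally have "Re u \<le> exp pi" using norm_u by linarith
    then have "- (pi * exp pi) \<le> Re u * (- pi)" by simp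
    also have "\<dots> \<le> Re u * (ln (norm u) - pi)"
      using norm_u assms(2) by (intro mult_left_mono) auto
    finally show ?thesis .
  qed
  then show ?thesis
    using Re_mult_Ln_ge[OF assms(1)] assms(2) by fastforce
qed

lemma xlogx_weight_dominates_exp_growth:
  assumes "0 < \<delta>" "0 \<le> A" "0 < B" "0 < K" "\<bar>Im z\<bar> \<le> Re z"
    and far: "exp ((2 * A + \<delta> * pi + \<bar>ln (B / K)\<bar>) / \<delta>) \<le> norm z"
  shows "K * exp (A * norm z) * exp (- \<delta> * Re ((z + 1) * Ln (z + 1))) \<le> B"
proof -
  define X where "X = Re ((z + 1) * Ln (z + 1))"
  define r where "r = Re (z + 1)"
  define E where "E = 2 * A + \<delta> * pi - \<delta> * ln (norm (z + 1))"
  have r: "1 \<le> r" using assms(5) by (simp add: r_def)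
  have "(Re z) ^ 2 \<le> (Re z + 1) ^ 2" using assms(5) by (intro power_mono) auto
  then have "norm z \<le> norm (z + 1)" by (simp add: cmod_def)
  then have "(2 * A + \<delta> * pi + \<bar>ln (B / K)\<bar>) / \<delta> \<le> ln (norm (z + 1))"
    using far by (subst ln_ge_iff) auto
  then have E: "E \<le> - \<bar>ln (B / K)\<bar>" using assms(1) by (simp add: E_def field_simps)
  have "A * norm z \<le> A * (2 * r)"
    using cmod_le[of z] assms(2,5) by (intro mult_left_mono) (auto simp: r_def)
  moreover have "r * (ln (norm (z + 1)) - pi) \<le> X"
    unfolding r_def X_def using assms(5) by (intro Re_mult_Ln_ge) (auto simp: complex_eq_iff)
  then have "\<delta> * (r * (ln (norm (z + 1)) - pi)) \<le> \<delta> * X"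
    using assms(1) by simp
  ultimately have "A * norm z - \<delta> * X \<le> r * E"
    by (simp add: E_def algebra_simps)
  also have "r * E \<le> E" using mult_right_mono_neg[of 1 r E] E r by simp
  also have "E \<le> ln (B / K)" using E by linarith
  finally have exponent: "A * norm z - \<delta> * X \<le> ln (B / K)" .
  have "K * exp (A * norm z) * exp (- \<delta> * X) = K * exp (A * norm z - \<delta> * X)"
    by (simp add: mult.assoc flip: exp_add)
  also have "\<dots> \<le> K * exp (ln (B / K))" using exponent \<open>0 < K\<close> by simp
  also have "\<dots> = B" using \<open>0 < B\<close> \<open>0 < K\<close> by simp
  finally show ?thesis by (simp only: X_def)
qed

lemma phragmen_lindelof_sector_weighted:
  fixes G :: "complex \<Rightarrow> complex"
  assumes hol: "G holomorphic_on {w. \<bar>Im w\<bar> \<le> Re w}"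
    and growth: "\<And>w. \<bar>Im w\<bar> \<le> Re w \<Longrightarrow> norm (G w) \<le> K * exp (A * norm w)"
    and boundary: "\<And>w. \<bar>Im w\<bar> = Re w \<Longrightarrow> norm (G w) \<le> B"
    and "0 < B" "0 < K" "0 \<le> A" "0 < \<delta>"
    and w0: "\<bar>Im w0\<bar> \<le> Re w0"
  shows "norm (G w0) * exp (- \<delta> * Re ((w0 + 1) * Ln (w0 + 1))) \<le> B * exp (\<delta> * (pi * exp pi))"
proof -
  define D where "D = {w. \<bar>Im w\<bar> \<le> Re w}"
  define P where "P w = (w + 1) * Ln (w + 1)" for w
  define \<Phi> where "\<Phi> w = G w * exp (- of_real \<delta> * P w)" for w
  define R where "R = exp ((2 * A + \<delta> * pi + \<bar>ln (B / K)\<bar>) / \<delta>)"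
  have norm_\<Phi>: "norm (\<Phi> w) = norm (G w) * exp (- \<delta> * Re (P w))" for w
    by (simp add: \<Phi>_def norm_mult)
  have "closed D" unfolding D_def by (intro closed_Collect_le continuous_intros)
  have "P holomorphic_on D"
    unfolding P_def
  proof (intro holomorphic_intros)
    fix w assume "w \<in> D"
    then show "w + 1 \<notin> \<real>\<^sub>\<le>\<^sub>0" by (auto simp: D_def complex_nonpos_Reals_iff)
  qed
  have "norm (\<Phi> w0) \<le> B * exp (\<delta> * (pi * exp pi))"
  proof (rule maximum_modulus_frontier_unbounded[OF \<open>closed D\<close>, of \<Phi> _ R])
    show "\<Phi> holomorphic_on D"
      unfolding \<Phi>_def by (intro holomorphic_intros hol[folded D_def] \<open>P holomorphic_on D\<close>)
    show "w0 \<in> D" using w0 by (simp add: D_def)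
  next
    fix w assume "w \<in> frontier D"
    moreover have "frontier D \<subseteq> {w. \<bar>Im w\<bar> = Re w}"
      unfolding D_def by (intro frontier_Collect_le_subset continuous_intros)
    ultimately have "\<bar>Im w\<bar> = Re w" by auto
    moreover have "- (pi * exp pi) \<le> Re (P w)"
      using Re_mult_Ln_ge_const[of "w + 1"] \<open>\<bar>Im w\<bar> = Re w\<close> by (auto simp: P_def)
    then have "exp (- \<delta> * Re (P w)) \<le> exp (\<delta> * (pi * exp pi))"
      using mult_left_mono[of _ _ \<delta>] \<open>0 < \<delta>\<close> by fastforce
    ultimately show "norm (\<Phi> w) \<le> B * exp (\<delta> * (pi * exp pi))"
      unfolding norm_\<Phi> using boundary \<open>0 < B\<close> by (intro mult_mono) auto
  next
    fix w assume w: "w \<in> D" "R \<le> norm w"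
    have "norm (\<Phi> w) \<le> K * exp (A * norm w) * exp (- \<delta> * Re (P w))"
      unfolding norm_\<Phi> using growth w(1) by (intro mult_right_mono) (auto simp: D_def)
    also have "\<dots> \<le> B"
      using xlogx_weight_dominates_exp_growth[OF \<open>0 < \<delta>\<close> \<open>0 \<le> A\<close> \<open>0 < B\<close> \<open>0 < K\<close>] w
      by (simp add: R_def P_def D_def)
    also have "\<dots> \<le> B * exp (\<delta> * (pi * exp pi))"
      using \<open>0 < B\<close> \<open>0 < \<delta>\<close> by simp
    finally show "norm (\<Phi> w) \<le> B * exp (\<delta> * (pi * exp pi))" .
  qed
  then show ?thesis by (simp only: norm_\<Phi> P_def)
qed

lemma phragmen_lindelof_sector:
  fixes G :: "complex \<Rightarrow> complex"
  assumes hol: "G holomorphic_on {w. \<bar>Im w\<bar> \<le> Re w}"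
    and growth: "\<And>w. \<bar>Im w\<bar> \<le> Re w \<Longrightarrow> norm (G w) \<le> K * exp (A * norm w)"
    and boundary: "\<And>w. \<bar>Im w\<bar> = Re w \<Longrightarrow> norm (G w) \<le> B"
    and "0 < B" "0 < K" "0 \<le> A"
    and w0: "\<bar>Im w0\<bar> \<le> Re w0"
  shows "norm (G w0) \<le> B"
proof -
  define X where "X = Re ((w0 + 1) * Ln (w0 + 1))"
  have weighted: "norm (G w0) \<le> B * exp (\<delta> * (pi * exp pi)) * exp (\<delta> * X)" if "0 < \<delta>" for \<delta>
    using phragmen_lindelof_sector_weighted[OF hol growth boundary \<open>0 < B\<close> \<open>0 < K\<close> \<open>0 \<le> A\<close> that w0]
    unfolding X_def[symmetric] by (simp add: exp_minus field_simps)
  have "((\<lambda>\<delta>. B * exp (\<delta> * (pi * exp pi)) * exp (\<delta> * X)) \<longlongrightarrow> B) (at_right 0)"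
    by (auto intro!: tendsto_eq_intros)
  then show ?thesis
    by (rule tendsto_lowerbound)
      (auto intro: eventually_mono[OF eventually_at_right_less] weighted)
qed

lemma phragmen_lindelof_right_halfplane:
  fixes F :: "complex \<Rightarrow> complex"
  assumes hol: "F holomorphic_on {z. 0 \<le> Re z}"
    and growth: "\<And>z. 0 \<le> Re z \<Longrightarrow> norm (F z) \<le> K * exp (A * norm z)"
    and imag_axis: "\<And>z. Re z = 0 \<Longrightarrow> norm (F z) \<le> B"
    and real_axis: "\<And>t. 0 \<le> t \<Longrightarrow> norm (F (of_real t)) \<le> B"
    and "0 < B" "0 < K" "0 \<le> A" "0 \<le> Re z"
  shows "norm (F z) \<le> B"
proof -
  obtain c where c: "c = 1 + \<i> \<or> c = 1 - \<i>" and sector: "\<bar>Im (z / c)\<bar> \<le> Re (z / c)"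
  proof (cases "0 \<le> Im z")
    case True
    then show ?thesis using \<open>0 \<le> Re z\<close> that[of "1 + \<i>"]
      by (simp add: Re_divide Im_divide abs_le_iff field_simps)
  next
    case False
    then show ?thesis using \<open>0 \<le> Re z\<close> that[of "1 - \<i>"]
      by (simp add: Re_divide Im_divide abs_le_iff field_simps)
  qed
  have halfplane: "0 \<le> Re (c * w)" if "\<bar>Im w\<bar> \<le> Re w" for w
    using c that by (auto simp: abs_le_iff)
  have "norm (c * w) \<le> 2 * norm w" for w
  proof -
    have "norm c \<le> 2" using c real_sqrt_le_iff[of 2 4] by (auto simp: cmod_def)
    then show ?thesis by (simp add: norm_mult mult_right_mono)
  qed
  have "norm (F (c * (z / c))) \<le> B"
  proof (rule phragmen_lindelof_sector[of "\<lambda>w. F (c * w)" K "2 * A"])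
    have "(\<lambda>w. c * w) ` {w. \<bar>Im w\<bar> \<le> Re w} \<subseteq> {z. 0 \<le> Re z}"
      using halfplane by auto
    then show "(\<lambda>w. F (c * w)) holomorphic_on {w. \<bar>Im w\<bar> \<le> Re w}"
      using holomorphic_on_compose_gen[OF _ hol] by (auto simp: o_def intro: holomorphic_intros)
  next
    fix w assume "\<bar>Im w\<bar> \<le> Re w"
    then have "norm (F (c * w)) \<le> K * exp (A * norm (c * w))" using growth halfplane by blast
    also have "\<dots> \<le> K * exp (2 * A * norm w)"
      using mult_left_mono[OF \<open>norm (c * w) \<le> 2 * norm w\<close> \<open>0 \<le> A\<close>] \<open>0 < K\<close> by simp
    finally show "norm (F (c * w)) \<le> K * exp (2 * A * norm w)" .
  next
    fix w assume "\<bar>Im w\<bar> = Re w"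
    then have "Re (c * w) = 0 \<or> Im (c * w) = 0 \<and> 0 \<le> Re (c * w)"
      using c by (auto simp: abs_if split: if_splits)
    moreover have "c * w = of_real (Re (c * w))" if "Im (c * w) = 0"
      using that by (simp add: complex_eq_iff)
    ultimately show "norm (F (c * w)) \<le> B" using imag_axis real_axis by metis
  qed (use sector \<open>0 < B\<close> \<open>0 < K\<close> \<open>0 \<le> A\<close> in auto)
  moreover have "c \<noteq> 0" using c by (auto simp: complex_eq_iff)
  ultimately show ?thesis by simp
qed

lemma norm_1_plus_real_mult_ge:
  fixes z :: complex
  assumes "0 \<le> Re z" "0 \<le> d"
  shows "1 \<le> norm (1 + of_real d * z)" "d * norm z \<le> norm (1 + of_real d * z)"
proof -
  have "1 \<le> Re (1 + of_real d * z)" using assms by simp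
  then show "1 \<le> norm (1 + of_real d * z)" using complex_Re_le_cmod order_trans by blast
  have "(d * Re z) ^ 2 \<le> (1 + d * Re z) ^ 2" using assms by (intro power_mono) auto
  then have "(d * norm z) ^ 2 \<le> (norm (1 + of_real d * z)) ^ 2"
    by (simp add: cmod_power2 power_mult_distrib algebra_simps)
  then show "d * norm z \<le> norm (1 + of_real d * z)"
    by (rule power2_le_imp_le) simp
qed

lemma norm_divide_1_plus_real_mult_le:
  fixes F :: "complex \<Rightarrow> complex"
  assumes hol: "F holomorphic_on {z. 0 \<le> Re z}"
    and B: "\<And>z. 0 \<le> Re z \<Longrightarrow> norm (F z) \<le> B"
    and imag_axis: "\<And>z. Re z = 0 \<Longrightarrow> norm (F z) \<le> M"
    and "0 < M" "0 < \<delta>" "0 \<le> Re z0"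
  shows "norm (F z0 / (1 + of_real \<delta> * z0)) \<le> M"
proof (rule maximum_modulus_frontier_unbounded[of "{z. 0 \<le> Re z}"
      "\<lambda>z. F z / (1 + of_real \<delta> * z)" _ "B / (\<delta> * M)"])
  have denom: "1 \<le> norm (1 + of_real \<delta> * z)" "\<delta> * norm z \<le> norm (1 + of_real \<delta> * z)"
    if "0 \<le> Re z" for z
    using norm_1_plus_real_mult_ge[of z \<delta>] that \<open>0 < \<delta>\<close> by auto
  show "closed {z. 0 \<le> Re z}" by (intro closed_Collect_le continuous_intros)
  show "(\<lambda>z. F z / (1 + of_real \<delta> * z)) holomorphic_on {z. 0 \<le> Re z}"
    using denom(1) by (intro holomorphic_intros hol) force
  show "z0 \<in> {z. 0 \<le> Re z}" using \<open>0 \<le> Re z0\<close> by simp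
next
  fix z assume "z \<in> frontier {z. 0 \<le> Re z}"
  moreover have "frontier {z. 0 \<le> Re z} \<subseteq> {z. 0 = Re z}"
    by (intro frontier_Collect_le_subset continuous_intros)
  ultimately have "Re z = 0" by auto
  moreover have "norm (F z) / norm (1 + of_real \<delta> * z) \<le> norm (F z) / 1"
    using norm_1_plus_real_mult_ge(1)[of z \<delta>] \<open>Re z = 0\<close> \<open>0 < \<delta>\<close>
    by (intro divide_left_mono) auto
  ultimately show "norm (F z / (1 + of_real \<delta> * z)) \<le> M"
    unfolding norm_divide using imag_axis by fastforce
next
  fix z assume z: "z \<in> {z. 0 \<le> Re z}" "B / (\<delta> * M) \<le> norm z"
  then have "B \<le> M * (\<delta> * norm z)"
    using \<open>0 < \<delta>\<close> \<open>0 < M\<close> by (simp add: field_simps)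
  also have "\<dots> \<le> M * norm (1 + of_real \<delta> * z)"
    using norm_1_plus_real_mult_ge(2)[of z \<delta>] z \<open>0 < \<delta>\<close> \<open>0 < M\<close> by simp
  finally show "norm (F z / (1 + of_real \<delta> * z)) \<le> M"
    using B[of z] norm_1_plus_real_mult_ge(1)[of z \<delta>] z \<open>0 < \<delta>\<close> \<open>0 < M\<close>
    unfolding norm_divide by (simp add: divide_le_eq)
qed

lemma phragmen_lindelof_right_halfplane_bounded:
  fixes F :: "complex \<Rightarrow> complex"
  assumes hol: "F holomorphic_on {z. 0 \<le> Re z}"
    and "bounded (F ` {z. 0 \<le> Re z})"
    and imag_axis: "\<And>z. Re z = 0 \<Longrightarrow> norm (F z) \<le> M"
    and "0 < M" "0 \<le> Re z0"
  shows "norm (F z0) \<le> M"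
proof -
  obtain B where B: "\<And>z. 0 \<le> Re z \<Longrightarrow> norm (F z) \<le> B"
    using \<open>bounded (F ` {z. 0 \<le> Re z})\<close> by (auto simp: bounded_iff)
  have weighted: "norm (F z0) \<le> M * (1 + \<delta> * norm z0)" if "0 < \<delta>" for \<delta>
  proof -
    have "0 < norm (1 + of_real \<delta> * z0)"
      using norm_1_plus_real_mult_ge(1)[OF \<open>0 \<le> Re z0\<close>, of \<delta>] \<open>0 < \<delta>\<close> by linarith
    then have "norm (F z0) \<le> M * norm (1 + of_real \<delta> * z0)"
      using norm_divide_1_plus_real_mult_le[OF hol B imag_axis \<open>0 < M\<close> that \<open>0 \<le> Re z0\<close>]
      by (simp add: norm_divide divide_le_eq)
    also have "\<dots> \<le> M * (1 + \<delta> * norm z0)"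
      using norm_triangle_ineq[of 1 "of_real \<delta> * z0"] \<open>0 < \<delta>\<close> \<open>0 < M\<close>
      by (simp add: norm_mult)
    finally show ?thesis .
  qed
  have "((\<lambda>\<delta>. M * (1 + \<delta> * norm z0)) \<longlongrightarrow> M) (at_right 0)"
    by (auto intro!: tendsto_eq_intros)
  then show ?thesis
    by (rule tendsto_lowerbound)
      (auto intro: eventually_mono[OF eventually_at_right_less] weighted)
qed

lemma decay_halfplane_exp_bound:
  fixes h :: "complex \<Rightarrow> complex"
  assumes hol: "h holomorphic_on {z. 0 \<le> Re z}"
    and M: "\<And>w. 0 \<le> Re w \<Longrightarrow> norm (h w) \<le> M" and "0 < M"
    and decay: "(\<lambda>t::real. h (of_real t)) \<in> O[at_top](\<lambda>t. complex_of_real (exp (- a * t)))"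
    and "0 < a" "0 \<le> Re z"
  shows "norm (h z) * exp (a * Re z) \<le> M"
proof -
  define F where "F w = h w * exp (of_real a * w)" for w
  have norm_F: "norm (F w) = norm (h w) * exp (a * Re w)" for w
    by (simp add: F_def norm_mult)
  have holF: "F holomorphic_on {w. 0 \<le> Re w}"
    unfolding F_def by (intro holomorphic_intros hol)
  obtain C T where C: "\<And>t. T \<le> t \<Longrightarrow> norm (h (of_real t)) \<le> C * exp (- a * t)"
    using decay by (elim landau_o.bigE) (force simp: eventually_at_top_linorder)
  define B where "B = max C (M * exp (a * max T 0))"
  have "M * 1 \<le> M * exp (a * max T 0)"
    using \<open>0 < M\<close> \<open>0 < a\<close> by (intro mult_left_mono) auto
  then have "M \<le> B" by (simp add: B_def)
  have real_axis: "norm (F (of_real t)) \<le> B" if "0 \<le> t" for t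
  proof (cases "T \<le> t")
    case True
    then have "norm (F (of_real t)) \<le> C * exp (- a * t) * exp (a * t)"
      unfolding norm_F Re_complex_of_real using C by (intro mult_right_mono) auto
    then show ?thesis by (simp add: B_def mult.assoc flip: exp_add)
  next
    case False
    then have "exp (a * t) \<le> exp (a * max T 0)" using \<open>0 < a\<close> by simp
    then have "norm (F (of_real t)) \<le> M * exp (a * max T 0)"
      unfolding norm_F using M[of "of_real t"] \<open>0 \<le> t\<close> \<open>0 < M\<close> by (intro mult_mono) auto
    then show ?thesis by (simp add: B_def)
  qed
  have imag_axis: "norm (F w) \<le> M" if "Re w = 0" for w
    using M[of w] that by (simp add: norm_F)
  have growth: "norm (F w) \<le> M * exp (a * norm w)" if "0 \<le> Re w" for w
    unfolding norm_F using M[OF that] complex_Re_le_cmod[of w] \<open>0 < a\<close> \<open>0 < M\<close>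
    by (intro mult_mono) auto
  have "norm (F w) \<le> B" if "0 \<le> Re w" for w
    using phragmen_lindelof_right_halfplane[OF holF growth _ real_axis] imag_axis
      \<open>M \<le> B\<close> \<open>0 < M\<close> \<open>0 < a\<close> that by force
  then have "bounded (F ` {w. 0 \<le> Re w})" by (auto simp: bounded_iff)
  then have "norm (F z) \<le> M"
    using phragmen_lindelof_right_halfplane_bounded[OF holF _ imag_axis \<open>0 < M\<close>] \<open>0 \<le> Re z\<close>
    by simp
  then show ?thesis by (simp add: norm_F)
qed

lemma rapid_decay_halfplane_eq_0:
  fixes h :: "complex \<Rightarrow> complex"
  assumes hol: "h holomorphic_on {z. 0 \<le> Re z}"
    and "bounded (h ` {z. 0 \<le> Re z})"
    and decay: "\<And>a. 0 < a \<Longrightarrow>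
      (\<lambda>t::real. h (of_real t)) \<in> O[at_top](\<lambda>t. complex_of_real (exp (- a * t)))"
    and "0 < Re z"
  shows "h z = 0"
proof -
  obtain M where "0 < M" and M: "\<And>w. 0 \<le> Re w \<Longrightarrow> norm (h w) \<le> M"
    using \<open>bounded (h ` {z. 0 \<le> Re z})\<close> by (auto simp: bounded_pos)
  have weighted: "norm (h z) \<le> M * exp (- Re z * a)" if "0 < a" for a
    using decay_halfplane_exp_bound[OF hol M \<open>0 < M\<close> decay[OF that] that] \<open>0 < Re z\<close>
    by (simp add: exp_minus field_simps)
  have "((\<lambda>a. M * exp (- Re z * a)) \<longlongrightarrow> 0) at_top"
    by (intro tendsto_mult_right_zero filterlim_compose[OF exp_at_bot]
        filterlim_tendsto_neg_mult_at_bot[OF tendsto_const] filterlim_ident)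
      (use \<open>0 < Re z\<close> in simp)
  then have "norm (h z) \<le> 0"
    by (rule tendsto_lowerbound) (use eventually_mono[OF eventually_gt_at_top weighted] in auto)
  then show ?thesis by simp
qed

lemma rapid_decay_shift_mult:
  fixes f g :: "complex \<Rightarrow> complex"
  assumes decay: "\<And>a. 0 < a \<Longrightarrow>
      (\<lambda>t::real. f (of_real t)) \<in> O[at_top](\<lambda>t. complex_of_real (exp (- a * t)))"
    and g: "\<And>t. 0 \<le> t \<Longrightarrow> norm (g (of_real (t + c))) \<le> 1"
    and "0 < a"
  shows "(\<lambda>t::real. f (of_real (t + c)) * g (of_real (t + c)))
           \<in> O[at_top](\<lambda>t. complex_of_real (exp (- a * t)))"
proof -
  have "(\<lambda>t. f (of_real (t + c))) \<in> O[at_top](\<lambda>t. complex_of_real (exp (- a * (t + c))))"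
    by (rule landau_o.big.compose[OF decay[OF \<open>0 < a\<close>]])
      (subst add.commute, rule filterlim_tendsto_add_at_top[OF tendsto_const filterlim_ident])
  also have "(\<lambda>t. complex_of_real (exp (- a * (t + c))))
      = (\<lambda>t. complex_of_real (exp (- a * c)) * complex_of_real (exp (- a * t)))"
    by (simp add: algebra_simps flip: of_real_mult exp_add)
  also have "O[at_top](\<dots>) = O[at_top](\<lambda>t. complex_of_real (exp (- a * t)))"
    by simp
  finally have f_decay: "(\<lambda>t. f (of_real (t + c))) \<in> O[at_top](\<lambda>t. of_real (exp (- a * t)))" .
  have "eventually (\<lambda>t. norm (f (of_real (t + c)) * g (of_real (t + c)))
      \<le> norm (f (of_real (t + c)))) at_top"
    using eventually_ge_at_top[of 0]
  proof eventually_elim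
    case (elim t)
    show ?case
      unfolding norm_mult by (rule mult_left_le[OF g[OF elim] norm_ge_zero])
  qed
  then show ?thesis
    by (rule landau_o.big_trans[OF landau_o.big_mono f_decay])
qed

lemma norm_exp_powr_of_real_le_1:
  assumes "0 \<le> b" "0 < s"
  shows "norm (exp (- complex_of_real b * of_real s powr complex_of_real r)) \<le> 1"
proof -
  have "of_real s powr of_real r = complex_of_real (s powr r)"
    using \<open>0 < s\<close> by (simp add: powr_of_real)
  then show ?thesis using \<open>0 \<le> b\<close> by simp
qed

lemma holomorphic_halfplane_eq_0:
  fixes f :: "complex \<Rightarrow> complex"
  assumes "f holomorphic_on {z. \<beta> < Re z}"
    and "\<beta> \<le> c" "\<And>z. c < Re z \<Longrightarrow> f z = 0" "\<beta> < Re z"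
  shows "f z = 0"
proof (rule analytic_continuation_open[of "{z. c < Re z}" "{z. \<beta> < Re z}" f "\<lambda>_. 0"])
  show "{z. c < Re z} \<noteq> {}" by (auto intro!: exI[of _ "of_real (c + 1)"])
qed (use assms in \<open>auto simp: open_halfspace_Re_gt\<close>)

lemma rapid_decay_mult_exp_powr_unbounded:
  fixes f :: "complex \<Rightarrow> complex" and \<beta> b r :: real
  assumes analytic: "f analytic_on {z. Re z > \<beta>}"
    and nonzero: "\<exists>z. Re z > \<beta> \<and> f z \<noteq> 0"
    and decay: "\<And>a. a > 0 \<Longrightarrow>
           (\<lambda>t::real. f (complex_of_real t)) \<in> O[at_top](\<lambda>t. complex_of_real (exp (- a * t)))"
    and "0 < b"
  shows "\<not> bounded ((\<lambda>z. f z * exp (- complex_of_real b * z powr complex_of_real r))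
                        ` {z. Re z \<ge> 0 \<and> Re z > \<beta>})"
proof
  define g where "g z = exp (- complex_of_real b * z powr complex_of_real r)" for z
  define c where "c = max \<beta> 0 + 1"
  define h where "h z = f (z + of_real c) * g (z + of_real c)" for z
  assume "bounded ((\<lambda>z. f z * g z) ` {z. Re z \<ge> 0 \<and> Re z > \<beta>})"
  moreover have shift: "(\<lambda>z. z + of_real c) ` {z. 0 \<le> Re z} \<subseteq> {z. Re z \<ge> 0 \<and> Re z > \<beta>}"
    by (auto simp: c_def)
  moreover have "h ` {z. 0 \<le> Re z} = (\<lambda>z. f z * g z) ` (\<lambda>z. z + of_real c) ` {z. 0 \<le> Re z}"
    by (simp add: h_def image_image)
  ultimately have "bounded (h ` {z. 0 \<le> Re z})"
    by (metis bounded_subset image_mono)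
  have holf: "f holomorphic_on {z. \<beta> < Re z}"
    using analytic by (rule analytic_imp_holomorphic)
  have "h holomorphic_on {z. 0 \<le> Re z}"
  proof -
    have "(\<lambda>z. z + of_real c) ` {z. 0 \<le> Re z} \<subseteq> {z. \<beta> < Re z}" using shift by auto
    then have "(\<lambda>z. f (z + of_real c)) holomorphic_on {z. 0 \<le> Re z}"
      using holomorphic_on_compose_gen[OF _ holf] by (simp add: o_def holomorphic_intros)
    moreover have "z + of_real c \<notin> \<real>\<^sub>\<le>\<^sub>0" if "0 \<le> Re z" for z
      using that by (auto simp: c_def complex_nonpos_Reals_iff)
    ultimately show ?thesis unfolding h_def g_def by (intro holomorphic_intros) auto
  qed
  have "(\<lambda>t::real. h (of_real t)) \<in> O[at_top](\<lambda>t. complex_of_real (exp (- a * t)))"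
    if "0 < a" for a
  proof -
    have "norm (g (of_real (t + c))) \<le> 1" if "0 \<le> t" for t
      unfolding g_def using norm_exp_powr_of_real_le_1[of b "t + c"] \<open>0 < b\<close> that
      by (simp add: c_def)
    from rapid_decay_shift_mult[where f = f and g = g and c = c, OF decay this \<open>0 < a\<close>]
    show ?thesis
      by (simp add: h_def)
  qed
  then have h_eq_0: "h z = 0" if "0 < Re z" for z
    using rapid_decay_halfplane_eq_0[OF \<open>h holomorphic_on _\<close> \<open>bounded (h ` _)\<close>] that by blast
  have f_eq_0: "f z = 0" if "c < Re z" for z
    using h_eq_0[of "z - of_real c"] that by (simp add: h_def g_def)
  have "\<beta> \<le> c" by (simp add: c_def)
  then have "f z = 0" if "\<beta> < Re z" for z
    using holomorphic_halfplane_eq_0[OF holf _ f_eq_0 that] by blast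
  then show False using nonzero by auto
qed

theorem lemma2:
  fixes f :: "complex \<Rightarrow> complex" and \<beta> :: real
  assumes "f analytic_on {z. Re z > \<beta>}"
    and "\<exists>z. Re z > \<beta> \<and> f z \<noteq> 0"
    and "\<And>a. a > 0 \<Longrightarrow>
           (\<lambda>t::real. f (complex_of_real t)) \<in> O[at_top](\<lambda>t. complex_of_real (exp (- a * t)))"
  shows "\<exists>\<epsilon>0>0. \<forall>\<epsilon>. 0 \<le> \<epsilon> \<and> \<epsilon> < \<epsilon>0 \<longrightarrow> (\<forall>b>0.
           \<not> bounded ((\<lambda>z. f z * exp (- complex_of_real b * z powr complex_of_real (1 - \<epsilon>)))
                        ` {z. Re z \<ge> 0 \<and> Re z > \<beta>}))"
  by (intro exI[of _ 1] conjI allI impI zero_less_one rapid_decay_mult_exp_powr_unbounded[OF assms])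

end
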